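(* For all $v,w\in(-1,+\infty)$, $$(\ln(1+v))^2+(\ln(1+w))^2\ge\frac12\Big(\ln\big(1+\sqrt{v^2+w^2}\big)\Big)^2.$$ *)

theory Defs
  imports Complex_Main
begin

end

theory Submission
  imports Defs "HOL-Analysis.Analysis"
begin

text \<open>Assume \<open>|w| \<le> |v|\<close>, so that \<open>r = sqrt (v^2 + w^2) \<le> sqrt 2 * |v|\<close>. Concavity of \<open>ln\<close>
  gives \<open>ln (1 + c * a) \<le> c * ln (1 + a)\<close> for \<open>c \<ge> 1\<close>, hence
  \<open>ln (1 + r) \<le> sqrt 2 * ln (1 + |v|)\<close>, and \<open>ln (1 + |v|) \<le> |ln (1 + v)|\<close> because
  \<open>(1 - x) * (1 + x) \<le> 1\<close>. Squaring, \<open>(ln (1 + r))^2 \<le> 2 * (ln (1 + v))^2\<close>.\<close>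

lemma ln_one_plus_abs_le_abs_ln:
  fixes x :: real
  assumes "x > -1"
  shows "ln (1 + \<bar>x\<bar>) \<le> \<bar>ln (1 + x)\<bar>"
proof (cases "x \<ge> 0")
  case True
  then show ?thesis by simp
next
  case False
  have "(1 - x) * (1 + x) \<le> 1"
    by (simp add: algebra_simps)
  then have "1 - x \<le> inverse (1 + x)"
    using assms by (simp add: field_simps)
  then have "ln (1 - x) \<le> ln (inverse (1 + x))"
    using False by (intro ln_mono) auto
  also have "\<dots> = - ln (1 + x)"
    using assms by (simp add: ln_inverse)
  finally show ?thesis
    using False by simp
qed

lemma ln_one_plus_mult_le:
  fixes a c :: real
  assumes "0 \<le> a" and "1 \<le> c"
  shows "ln (1 + c * a) \<le> c * ln (1 + a)"
proof -
  have "(1 - 1 / c) * ln 1 + (1 / c) * ln (1 + c * a)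
      \<le> ln ((1 - 1 / c) *\<^sub>R 1 + (1 / c) *\<^sub>R (1 + c * a))"
    using assms by (intro concave_onD[OF ln_concave]) (auto simp: add_pos_nonneg)
  also have "(1 - 1 / c) *\<^sub>R 1 + (1 / c) *\<^sub>R (1 + c * a) = 1 + a"
    using assms by (simp add: field_simps)
  finally have "ln (1 + c * a) / c \<le> ln (1 + a)"
    by simp
  then show ?thesis
    using assms by (simp add: divide_le_eq mult.commute)
qed

lemma sq_ln_one_plus_norm_le:
  fixes v w :: real
  assumes "v > -1" and "\<bar>w\<bar> \<le> \<bar>v\<bar>"
  shows "(ln (1 + sqrt (v^2 + w^2)))^2 \<le> 2 * (ln (1 + v))^2"
proof -
  have "sqrt (v^2 + w^2) \<le> sqrt (2 * \<bar>v\<bar>^2)"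
    using assms(2) by (intro real_sqrt_le_mono) (simp add: abs_le_square_iff)
  then have "ln (1 + sqrt (v^2 + w^2)) \<le> ln (1 + sqrt 2 * \<bar>v\<bar>)"
    by (intro ln_mono) (auto simp: real_sqrt_mult add_pos_nonneg)
  also have "\<dots> \<le> sqrt 2 * ln (1 + \<bar>v\<bar>)"
    by (intro ln_one_plus_mult_le) auto
  also have "\<dots> \<le> sqrt 2 * \<bar>ln (1 + v)\<bar>"
    using ln_one_plus_abs_le_abs_ln[OF assms(1)] by simp
  finally have "(ln (1 + sqrt (v^2 + w^2)))^2 \<le> (sqrt 2 * \<bar>ln (1 + v)\<bar>)^2"
    by (intro power_mono) simp_all
  then show ?thesis
    by (simp add: power_mult_distrib)
qed

theorem lemmaA1:
  fixes v w :: real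
  assumes "v > -1" and "w > -1"
  shows "(ln (1 + v))^2 + (ln (1 + w))^2 \<ge> (1/2) * (ln (1 + sqrt (v^2 + w^2)))^2"
proof (cases "\<bar>w\<bar> \<le> \<bar>v\<bar>")
  case True
  have "(ln (1 + sqrt (v^2 + w^2)))^2 \<le> 2 * (ln (1 + v))^2"
    using assms(1) True by (rule sq_ln_one_plus_norm_le)
  then show ?thesis
    using zero_le_power2[of "ln (1 + w)"] by linarith
next
  case False
  then have "(ln (1 + sqrt (v^2 + w^2)))^2 \<le> 2 * (ln (1 + w))^2"
    using assms(2) sq_ln_one_plus_norm_le[of w v] by (simp add: add.commute)
  then show ?thesis
    using zero_le_power2[of "ln (1 + v)"] by linarith
qed

end
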